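(* Let $\mathbb{T}$ be a split torus over $k$ with character lattice $M$ and cocharacter lattice $N$, let $p\in N$ be a primitive vector and $e\in M$. Let $\partial_{p,e}$ be the $k$-derivation of $k[M]$ (extended to $K_{\mathbb{T}}=\mathrm{Frac}(k[M])$) given by $\chi^m\mapsto p(m)\chi^{m+e}$. Then $\partial_{p,e}$ is rationally integrable if and only if $p(e)=\pm1$.
   Context: $k$ is a field of characteristic zero, $\mathbb{T}=\mathbb{G}_{m,k}^n$, $M=\mathrm{Hom}(\mathbb{T},\mathbb{G}_{m,k})$, $N=\mathrm{Hom}(\mathbb{G}_{m,k},\mathbb{T})$ with the natural pairing $p(m)\in\mathbb{Z}$; $k[M]=\bigoplus_{m\in M}k\chi^m$. A $k$-derivation $\partial$ of a field $K$ is rationally integrable if for every $f\in K$ the series $\sum_{n\ge0}\frac{\partial^n(f)}{n!}t^n\in K[[t]]$ lies in $K(t)\cap K[[t]]$. *)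

theory Defs
  imports "HOL-Library.Poly_Mapping" "HOL-Computational_Algebra.Fraction_Field"
    "HOL-Computational_Algebra.Polynomial_FPS"
begin

(* Lattices: M = N = ('n \<Rightarrow>\<^sub>0 int), a free Z-module of rank CARD('n).
  The linorder on 'n only serves to obtain the idom instance of k[M].
  k[M] = (M \<Rightarrow>\<^sub>0 'k), the group algebra; chi^m = single m 1.*)

definition pairing :: "('n::finite \<Rightarrow>\<^sub>0 int) \<Rightarrow> ('n \<Rightarrow>\<^sub>0 int) \<Rightarrow> int" where
  "pairing p m = (\<Sum>i\<in>UNIV. Poly_Mapping.lookup p i * Poly_Mapping.lookup m i)"

definition primitive_vec :: "('n::finite \<Rightarrow>\<^sub>0 int) \<Rightarrow> bool" where
  "primitive_vec p \<longleftrightarrow> p \<noteq> 0 \<and> (\<forall>d::int. (\<forall>i. d dvd Poly_Mapping.lookup p i) \<longrightarrow> is_unit d)"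

definition chi :: "('n \<Rightarrow>\<^sub>0 int) \<Rightarrow> (('n \<Rightarrow>\<^sub>0 int) \<Rightarrow>\<^sub>0 'k::zero_neq_one)" where
  "chi m = Poly_Mapping.single m 1"

definition der_poly :: "('n::finite \<Rightarrow>\<^sub>0 int) \<Rightarrow> ('n \<Rightarrow>\<^sub>0 int)
    \<Rightarrow> (('n \<Rightarrow>\<^sub>0 int) \<Rightarrow>\<^sub>0 'k::comm_ring_1) \<Rightarrow> (('n \<Rightarrow>\<^sub>0 int) \<Rightarrow>\<^sub>0 'k)" where
  "der_poly p e f = (\<Sum>m\<in>Poly_Mapping.keys f. Poly_Mapping.single (m + e) (Poly_Mapping.lookup f m * of_int (pairing p m)))"

definition der_frac :: "('n::{finite,linorder} \<Rightarrow>\<^sub>0 int) \<Rightarrow> ('n \<Rightarrow>\<^sub>0 int)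
    \<Rightarrow> (('n \<Rightarrow>\<^sub>0 int) \<Rightarrow>\<^sub>0 'k::field) fract \<Rightarrow> (('n \<Rightarrow>\<^sub>0 int) \<Rightarrow>\<^sub>0 'k) fract" where
  "der_frac p e x = (SOME y. \<exists>a b. b \<noteq> 0 \<and> x = Fraction_Field.Fract a b \<and>
      y = Fraction_Field.Fract (der_poly p e a * b - a * der_poly p e b) (b * b))"

(* Rational integrability: the exponential series lies in K(t) \<inter> K[[t]], i.e. there are
  polynomials P, Q with Q \<noteq> 0 and Q * series = P in K[[t]].*)
definition rationally_integrable :: "('K::field \<Rightarrow> 'K) \<Rightarrow> bool" where
  "rationally_integrable D \<longleftrightarrow> (\<forall>f. \<exists>P Q :: 'K poly. Q \<noteq> 0 \<and>
      fps_of_poly Q * Abs_fps (\<lambda>n. (D ^^ n) f / of_nat (fact n)) = fps_of_poly P)"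

end

theory Submission
  imports Defs "HOL-Computational_Algebra.Polynomial_Factorial"
begin

(* Let D be a derivation of a field K of characteristic 0 and E(x) = sum_n D^n(x) t^n / n!
   its exponential series.  Since E(x + y) = E(x) + E(y) and E(x y) = E(x) E(y), the set of
   x whose series E(x) is a rational function is a subfield of K containing every D-constant.
   For K = Frac k[M] it therefore suffices to look at the characters chi^m.  Writing
   a = p(e), c = p(m) and z = chi^e, one computes D^(n+1) chi^m = (c + n a) z D^n chi^m,
   i.e. the series E(chi^m) solves the linear ODE  (1 - a z t) E' = c z E.  A power series
   solution of (1 + b t) E' = g E is rational iff g is an integer multiple of b (it is then
   E(0) (1 + b t)^(-g/b)), which here means  a | c.  Since p is primitive, p(e) divides all
   p(m) exactly when p(e) is a unit, i.e. p(e) = 1 or p(e) = -1. *)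

unbundle fps_syntax

locale derivation =
  fixes D :: "'a::comm_ring_1 \<Rightarrow> 'a"
  assumes D_add: "D (x + y) = D x + D y"
    and D_mult: "D (x * y) = D x * y + x * D y"
begin

lemma D_zero [simp]: "D 0 = 0"
  using D_add[of 0 0] by simp

lemma D_one [simp]: "D 1 = 0"
  using D_mult[of 1 1] by simp

lemma D_uminus: "D (- x) = - D x"
  using D_add[of x "- x"] by (simp add: add_eq_0_iff)

lemma D_diff: "D (x - y) = D x - D y"
  using D_add[of x "- y"] by (simp add: D_uminus)

lemma D_sum: "D (\<Sum>i\<in>A. f i) = (\<Sum>i\<in>A. D (f i))"
  by (induction A rule: infinite_finite_induct) (simp_all add: D_add)

lemma D_of_nat [simp]: "D (of_nat n) = 0"
  by (induction n) (simp_all add: D_add)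

lemma D_of_int [simp]: "D (of_int z) = 0"
  by (cases z rule: int_cases) (simp_all add: D_uminus D_diff)

lemma D_scale_of_int: "D (of_int z * x) = of_int z * D x"
  by (simp add: D_mult)

end

locale char0_derivation = derivation D for D :: "'a::field_char_0 \<Rightarrow> 'a"
begin

(* D commutes with division by a natural number; needed to differentiate D^n(x) / n!. *)
lemma D_divide_of_nat: "D (x / of_nat n) = D x / of_nat n"
proof (cases "n = 0")
  case False
  have "of_nat n * D (inverse (of_nat n)) = D (of_nat n * inverse (of_nat n))"
    by (simp add: D_mult)
  also have "\<dots> = 0" using False by simp
  finally have "D (inverse (of_nat n)) = 0" using False by simp
  then show ?thesis by (simp add: divide_inverse D_mult)
qed simp

definition exp_series :: "'a \<Rightarrow> 'a fps" where
  "exp_series x = Abs_fps (\<lambda>n. (D ^^ n) x / of_nat (fact n))"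

definition coeff_der :: "'a fps \<Rightarrow> 'a fps" where
  "coeff_der F = Abs_fps (\<lambda>n. D (F $ n))"

lemma exp_series_nth: "exp_series x $ n = (D ^^ n) x / of_nat (fact n)"
  by (simp add: exp_series_def)

lemma exp_series_nth_0 [simp]: "exp_series x $ 0 = x"
  by (simp add: exp_series_def)

lemma coeff_der_nth [simp]: "coeff_der F $ n = D (F $ n)"
  by (simp add: coeff_der_def)

lemma coeff_der_add: "coeff_der (F + G) = coeff_der F + coeff_der G"
  by (rule fps_ext) (simp add: D_add)

lemma coeff_der_mult: "coeff_der (F * G) = coeff_der F * G + F * coeff_der G"
  by (rule fps_ext) (simp add: fps_mult_nth D_sum D_mult sum.distrib)

lemma fps_deriv_exp_series: "fps_deriv (exp_series x) = coeff_der (exp_series x)"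
proof (rule fps_ext)
  fix n
  have "fps_deriv (exp_series x) $ n = of_nat (Suc n) * ((D ^^ Suc n) x / of_nat (fact (Suc n)))"
    by (simp only: fps_deriv_nth exp_series_nth Suc_eq_plus1)
  also have "\<dots> = of_nat (Suc n) * (D ((D ^^ n) x) / (of_nat (Suc n) * of_nat (fact n)))"
    by (simp only: fact_Suc of_nat_mult of_nat_id funpow.simps(2) o_apply)
  also have "\<dots> = D ((D ^^ n) x) / of_nat (fact n)"
    by (simp del: of_nat_Suc)
  also have "\<dots> = coeff_der (exp_series x) $ n"
    by (simp only: coeff_der_nth exp_series_nth D_divide_of_nat)
  finally show "fps_deriv (exp_series x) $ n = coeff_der (exp_series x) $ n" .
qed

lemma exp_series_unique:
  assumes "fps_deriv F = coeff_der F"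
  shows "F = exp_series (F $ 0)"
proof (rule fps_ext)
  fix n show "F $ n = exp_series (F $ 0) $ n"
  proof (induction n)
    case (Suc n)
    have "of_nat (Suc n) * F $ Suc n = D (F $ n)"
      using fps_deriv_nth[of F n] assms by simp
    also have "\<dots> = of_nat (Suc n) * exp_series (F $ 0) $ Suc n"
      using fps_deriv_nth[of "exp_series (F $ 0)" n] Suc by (simp add: fps_deriv_exp_series)
    finally show ?case by (simp del: of_nat_Suc)
  qed simp
qed

(* By uniqueness, exp(tD) is a ring homomorphism K -> K[[t]] fixing the constants of D. *)
lemma exp_series_add: "exp_series (x + y) = exp_series x + exp_series y"
  using exp_series_unique[of "exp_series x + exp_series y"]
  by (simp add: fps_deriv_exp_series coeff_der_add)

lemma exp_series_mult: "exp_series (x * y) = exp_series x * exp_series y"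
  using exp_series_unique[of "exp_series x * exp_series y"]
  by (simp add: fps_deriv_exp_series coeff_der_mult fps_deriv_mult add.commute)

lemma exp_series_const:
  assumes "D c = 0"
  shows "exp_series c = fps_const c"
proof -
  have "fps_deriv (fps_const c) = coeff_der (fps_const c)"
    by (rule fps_ext) (simp add: assms)
  from exp_series_unique[OF this] show ?thesis by simp
qed

definition exp_rational :: "'a \<Rightarrow> bool" where
  "exp_rational x \<longleftrightarrow> (\<exists>P Q. Q \<noteq> 0 \<and> fps_of_poly Q * exp_series x = fps_of_poly P)"

lemma rationally_integrable_iff: "rationally_integrable D \<longleftrightarrow> (\<forall>x. exp_rational x)"
  unfolding rationally_integrable_def exp_rational_def exp_series_def ..

lemma exp_rational_const: "D c = 0 \<Longrightarrow> exp_rational c"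
  unfolding exp_rational_def exp_series_const
  by (intro exI[of _ "[:c:]"] exI[of _ 1]) (simp add: fps_of_poly_const)

lemma exp_rational_add:
  assumes "exp_rational x" "exp_rational y"
  shows "exp_rational (x + y)"
proof -
  obtain P1 Q1 where 1: "Q1 \<noteq> 0" "fps_of_poly Q1 * exp_series x = fps_of_poly P1"
    using assms(1) exp_rational_def by blast
  obtain P2 Q2 where 2: "Q2 \<noteq> 0" "fps_of_poly Q2 * exp_series y = fps_of_poly P2"
    using assms(2) exp_rational_def by blast
  have "fps_of_poly (Q1 * Q2) * exp_series (x + y) =
      (fps_of_poly Q1 * exp_series x) * fps_of_poly Q2 + (fps_of_poly Q2 * exp_series y) * fps_of_poly Q1"
    by (simp add: exp_series_add fps_of_poly_mult algebra_simps)
  also have "\<dots> = fps_of_poly (P1 * Q2 + P2 * Q1)"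
    by (simp add: 1 2 fps_of_poly_mult fps_of_poly_add)
  finally show ?thesis
    unfolding exp_rational_def using 1 2 by (metis mult_eq_0_iff)
qed

lemma exp_rational_mult:
  assumes "exp_rational x" "exp_rational y"
  shows "exp_rational (x * y)"
proof -
  obtain P1 Q1 where 1: "Q1 \<noteq> 0" "fps_of_poly Q1 * exp_series x = fps_of_poly P1"
    using assms(1) exp_rational_def by blast
  obtain P2 Q2 where 2: "Q2 \<noteq> 0" "fps_of_poly Q2 * exp_series y = fps_of_poly P2"
    using assms(2) exp_rational_def by blast
  have "fps_of_poly (Q1 * Q2) * exp_series (x * y) =
      (fps_of_poly Q1 * exp_series x) * (fps_of_poly Q2 * exp_series y)"
    by (simp add: exp_series_mult fps_of_poly_mult algebra_simps)
  also have "\<dots> = fps_of_poly (P1 * P2)"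
    by (simp add: 1 2 fps_of_poly_mult)
  finally show ?thesis
    unfolding exp_rational_def using 1 2 by (metis mult_eq_0_iff)
qed

(* E(1/x) = 1 / E(x), so P/Q becomes Q/P. *)
lemma exp_rational_inverse:
  assumes "exp_rational x"
  shows "exp_rational (inverse x)"
proof (cases "x = 0")
  case False
  obtain P Q where 1: "Q \<noteq> 0" "fps_of_poly Q * exp_series x = fps_of_poly P"
    using assms exp_rational_def by blast
  have "exp_series x \<noteq> 0"
    using False by (metis exp_series_nth_0 fps_zero_nth)
  with 1 have "P \<noteq> 0"
    by (metis fps_of_poly_0 fps_of_poly_eq_iff mult_eq_0_iff)
  have "fps_of_poly P * exp_series (inverse x) = fps_of_poly Q * exp_series (x * inverse x)"
    by (simp add: exp_series_mult 1(2)[symmetric] algebra_simps)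
  also have "\<dots> = fps_of_poly Q"
    using False exp_series_const[of 1] by simp
  finally show ?thesis
    unfolding exp_rational_def using \<open>P \<noteq> 0\<close> by blast
qed (simp add: exp_rational_const)

lemma exp_rational_sum:
  "(\<And>i. i \<in> A \<Longrightarrow> exp_rational (f i)) \<Longrightarrow> exp_rational (\<Sum>i\<in>A. f i)"
  by (induction A rule: infinite_finite_induct) (simp_all add: exp_rational_const exp_rational_add)

end

definition lin_fps :: "'a::comm_ring_1 \<Rightarrow> 'a fps" where
  "lin_fps b = 1 + fps_const b * fps_X"

lemma fps_of_poly_lin: "fps_of_poly [:1, b:] = lin_fps b"
  by (simp add: lin_fps_def fps_of_poly_pCons fps_of_poly_const mult.commute)

lemma lin_fps_nth_0 [simp]: "lin_fps b $ 0 = 1"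
  by (simp add: lin_fps_def)

lemma lin_fps_mult_nth: "(lin_fps b * G) $ n = G $ n + (if n = 0 then 0 else b * G $ (n - 1))"
proof -
  have "lin_fps b * G = G + fps_const b * (fps_X * G)"
    by (simp add: lin_fps_def algebra_simps)
  then show ?thesis by simp
qed

lemma lin_fps_power_nth_0 [simp]: "(lin_fps b ^ k) $ 0 = 1"
  by (simp add: fps_nth_power_0 lin_fps_def)

lemma lin_fps_deriv_power: "lin_fps b * fps_deriv (lin_fps b ^ k) = fps_const (of_nat k * b) * lin_fps b ^ k"
proof (induction k)
  case (Suc k)
  have "lin_fps b * fps_deriv (lin_fps b ^ Suc k) =
      fps_const b * lin_fps b ^ Suc k + lin_fps b * (lin_fps b * fps_deriv (lin_fps b ^ k))"
    by (simp add: fps_deriv_mult lin_fps_def algebra_simps)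
  then show ?case
    unfolding Suc by (simp add: algebra_simps flip: fps_const_mult fps_const_add)
qed simp

lemma linear_ode_of_recursion:
  fixes E :: "'a::comm_ring_1 fps"
  assumes "\<And>n. of_nat (Suc n) * E $ Suc n = (g + of_nat n * h) * E $ n"
  shows "lin_fps (- h) * fps_deriv E = fps_const g * E"
proof (rule fps_ext)
  fix n show "(lin_fps (- h) * fps_deriv E) $ n = (fps_const g * E) $ n"
  proof (cases n)
    case 0 then show ?thesis using assms[of 0] by (simp add: lin_fps_mult_nth)
  next
    case (Suc k)
    have "(lin_fps (- h) * fps_deriv E) $ n =
        of_nat (Suc (Suc k)) * E $ Suc (Suc k) - h * (of_nat (Suc k) * E $ Suc k)"
      using Suc by (simp add: lin_fps_mult_nth del: of_nat_Suc)
    also have "\<dots> = g * E $ Suc k"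
      unfolding assms[of "Suc k"] by (simp add: algebra_simps)
    finally show ?thesis using Suc by simp
  qed
qed

lemma linear_ode_unique:
  fixes X :: "'a::field_char_0 fps"
  assumes "lin_fps b * fps_deriv X = fps_const g * X" "X $ 0 = 0"
  shows "X = 0"
proof -
  have "X $ n = 0" for n
  proof (induction n)
    case (Suc n)
    have "(lin_fps b * fps_deriv X) $ n = (fps_const g * X) $ n"
      using assms(1) by simp
    with Suc.IH have "of_nat (Suc n) * X $ Suc n = 0"
      by (cases n) (simp_all add: lin_fps_mult_nth del: of_nat_Suc)
    then show ?case by (simp del: of_nat_Suc)
  qed (rule assms(2))
  then show ?thesis by (simp add: fps_eq_iff)
qed

lemma linear_ode_rational_solution:
  fixes E :: "'a::field_char_0 fps"
  assumes ode: "lin_fps b * fps_deriv E = fps_const (of_int j * b) * E"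
  shows "\<exists>P Q. Q \<noteq> 0 \<and> fps_of_poly Q * E = fps_of_poly P"
proof (cases "j \<ge> 0")
  case True
  define k where "k = nat j"
  define X where "X = E - fps_const (E $ 0) * lin_fps b ^ k"
  have "lin_fps b * fps_deriv X =
      lin_fps b * fps_deriv E - fps_const (E $ 0) * (lin_fps b * fps_deriv (lin_fps b ^ k))"
    by (simp add: X_def algebra_simps)
  also have "\<dots> = fps_const (of_nat k * b) * X"
    using True unfolding ode lin_fps_deriv_power by (simp add: X_def k_def algebra_simps)
  finally have "X = 0"
    by (rule linear_ode_unique) (simp add: X_def)
  then have "fps_of_poly 1 * E = fps_of_poly (smult (E $ 0) ([:1, b:] ^ k))"
    by (simp add: X_def fps_of_poly_power fps_of_poly_lin fps_of_poly_smult)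
  then show ?thesis by (metis one_neq_zero)
next
  case False
  define k where "k = nat (- j)"
  define X where "X = lin_fps b ^ k * E - fps_const (E $ 0)"
  have "lin_fps b * fps_deriv X =
      (lin_fps b * fps_deriv (lin_fps b ^ k)) * E + lin_fps b ^ k * (lin_fps b * fps_deriv E)"
    by (simp add: X_def fps_deriv_mult algebra_simps)
  also have "\<dots> = fps_const (of_nat k * b + of_int j * b) * (lin_fps b ^ k * E)"
    unfolding ode lin_fps_deriv_power by (simp add: algebra_simps flip: fps_const_add)
  also have "\<dots> = fps_const 0 * X"
    using False by (simp add: k_def)
  finally have "X = 0"
    by (rule linear_ode_unique) (simp add: X_def)
  then have "fps_of_poly ([:1, b:] ^ k) * E = fps_of_poly [:E $ 0:]"
    by (simp add: X_def fps_of_poly_power fps_of_poly_lin fps_of_poly_const)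
  moreover have "[:1, b:] ^ k \<noteq> 0" by simp
  ultimately show ?thesis by blast
qed

lemma coeff_mult_degree_le:
  fixes X Y :: "'a::comm_ring_1 poly"
  assumes "degree X \<le> i" "degree Y \<le> j"
  shows "coeff (X * Y) (i + j) = coeff X i * coeff Y j"
proof -
  have "coeff X k * coeff Y (i + j - k) = 0" if "k \<in> {..i + j} - {i}" for k
  proof (cases "k < i")
    case True
    then have "degree Y < i + j - k" using assms(2) by linarith
    then show ?thesis by (simp add: coeff_eq_0)
  next
    case False
    with that have "degree X < k" using assms(1) by auto
    then show ?thesis by (simp add: coeff_eq_0)
  qed
  then have "(\<Sum>k\<le>i + j. coeff X k * coeff Y (i + j - k)) = coeff X i * coeff Y j"
    by (subst sum.remove[of _ i]) simp_all
  then show ?thesis by (simp add: coeff_mult)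
qed

lemma linear_ode_operator_top_coeff:
  fixes Q :: "'a::field poly" and b g :: 'a
  defines "A \<equiv> [:1, b:] * pderiv Q + smult g Q"
  shows "degree A \<le> degree Q" and "coeff A (degree Q) = (b * of_nat (degree Q) + g) * lead_coeff Q"
proof -
  have coeff_A: "coeff A k = coeff (pderiv Q) k + (if k = 0 then 0 else b * coeff (pderiv Q) (k - 1))
      + g * coeff Q k" for k
    unfolding A_def by (cases k) (simp_all add: mult_pCons_left coeff_pCons)
  show "degree A \<le> degree Q"
  proof (rule degree_le, intro allI impI)
    fix k assume k: "degree Q < k"
    then obtain j where j: "k = Suc j" by (cases k) auto
    show "coeff A k = 0" using k unfolding coeff_A j by (simp add: coeff_pderiv coeff_eq_0)
  qed
  show "coeff A (degree Q) = (b * of_nat (degree Q) + g) * lead_coeff Q"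
    by (cases "degree Q") (simp_all add: coeff_A coeff_pderiv coeff_eq_0 algebra_simps del: of_nat_Suc)
qed

lemma linear_ode_rational_identity:
  fixes E :: "'a::field_char_0 fps"
  assumes ode: "lin_fps b * fps_deriv E = fps_const g * E"
    and QE: "fps_of_poly Q * E = fps_of_poly P"
  shows "([:1, b:] * pderiv Q + smult g Q) * P = ([:1, b:] * pderiv P + smult 0 P) * Q"
proof -
  have deriv_QE: "fps_of_poly (pderiv Q) * E + fps_of_poly Q * fps_deriv E = fps_of_poly (pderiv P)"
    using arg_cong[OF QE, of fps_deriv] by (simp add: fps_deriv_mult fps_of_poly_pderiv add.commute)
  have "fps_of_poly (([:1, b:] * pderiv Q + smult g Q) * P) =
      (lin_fps b * fps_of_poly (pderiv Q) + fps_const g * fps_of_poly Q) * (fps_of_poly Q * E)"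
    by (simp only: fps_of_poly_mult fps_of_poly_add fps_of_poly_smult fps_of_poly_lin QE)
  also have "\<dots> = fps_of_poly Q * lin_fps b * (fps_of_poly (pderiv Q) * E)
      + fps_of_poly Q * fps_of_poly Q * (fps_const g * E)"
    by (simp add: algebra_simps)
  also have "\<dots> = fps_of_poly Q * lin_fps b * (fps_of_poly (pderiv Q) * E + fps_of_poly Q * fps_deriv E)"
    unfolding ode[symmetric] by (simp add: algebra_simps)
  also have "\<dots> = fps_of_poly ([:1, b:] * pderiv P * Q)"
    by (simp only: deriv_QE fps_of_poly_mult fps_of_poly_lin) (simp add: mult_ac)
  finally show ?thesis
    by (simp only: fps_of_poly_eq_iff) simp
qed

(* Conversely to linear_ode_rational_solution: if a nonzero solution is rational, comparing
   the coefficients of degree deg P + deg Q in the identity above gives g = (deg P - deg Q) b. *)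
lemma linear_ode_rational_exponent:
  fixes E :: "'a::field_char_0 fps"
  assumes ode: "lin_fps b * fps_deriv E = fps_const g * E" and "E \<noteq> 0"
    and "Q \<noteq> 0" and QE: "fps_of_poly Q * E = fps_of_poly P"
  shows "\<exists>n::int. g = of_int n * b"
proof -
  have "P \<noteq> 0"
    using assms(2-) by (metis fps_of_poly_0 fps_of_poly_eq_iff mult_eq_0_iff)
  have "coeff (([:1, b:] * pderiv Q + smult g Q) * P) (degree Q + degree P) =
      (b * of_nat (degree Q) + g) * lead_coeff Q * lead_coeff P"
    using coeff_mult_degree_le[OF linear_ode_operator_top_coeff(1)[where Q=Q and b=b and g=g], of P "degree P"]
    by (simp only: linear_ode_operator_top_coeff(2))
  moreover have "coeff (([:1, b:] * pderiv P + smult 0 P) * Q) (degree P + degree Q) =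
      (b * of_nat (degree P) + 0) * lead_coeff P * lead_coeff Q"
    using coeff_mult_degree_le[OF linear_ode_operator_top_coeff(1)[where Q=P and b=b and g=0], of Q "degree Q"]
    by (simp only: linear_ode_operator_top_coeff(2))
  ultimately have "(b * of_nat (degree Q) + g) * lead_coeff Q * lead_coeff P =
      (b * of_nat (degree P) + 0) * lead_coeff P * lead_coeff Q"
    by (metis linear_ode_rational_identity[OF ode QE] add.commute)
  then have "(b * of_nat (degree Q) + g) * (lead_coeff Q * lead_coeff P) =
      (b * of_nat (degree P)) * (lead_coeff Q * lead_coeff P)"
    by (simp add: mult_ac)
  with \<open>P \<noteq> 0\<close> \<open>Q \<noteq> 0\<close> have "b * of_nat (degree Q) + g = b * of_nat (degree P)"
    by simp
  then have "g = (of_nat (degree P) - of_nat (degree Q)) * b"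
    by (simp add: algebra_simps)
  then show ?thesis
    by (metis of_int_diff of_int_of_nat_eq)
qed

definition fract_der :: "('a::idom \<Rightarrow> 'a) \<Rightarrow> 'a fract \<Rightarrow> 'a fract" where
  "fract_der d x = (SOME y. \<exists>a b. b \<noteq> 0 \<and> x = Fraction_Field.Fract a b \<and>
      y = Fraction_Field.Fract (d a * b - a * d b) (b * b))"

locale idom_derivation = derivation D for D :: "'a::idom \<Rightarrow> 'a"
begin

lemma quotient_rule_welldef:
  assumes "b \<noteq> 0" "b' \<noteq> 0" "a * b' = a' * b"
  shows "Fraction_Field.Fract (D a * b - a * D b) (b * b) =
         Fraction_Field.Fract (D a' * b' - a' * D b') (b' * b')"
proof -
  have "D a * b' + a * D b' = D a' * b + a' * D b"
    using arg_cong[OF assms(3), of D] by (simp add: D_mult)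
  with assms(3) have "(D a * b - a * D b) * (b' * b') = (D a' * b' - a' * D b') * (b * b)"
    by algebra
  then show ?thesis using assms by (simp add: eq_fract)
qed

lemma fract_der_Fract:
  assumes "b \<noteq> 0"
  shows "fract_der D (Fraction_Field.Fract a b) = Fraction_Field.Fract (D a * b - a * D b) (b * b)"
proof -
  define P where "P y \<longleftrightarrow> (\<exists>a' b'. b' \<noteq> 0 \<and> Fraction_Field.Fract a b = Fraction_Field.Fract a' b' \<and>
      y = Fraction_Field.Fract (D a' * b' - a' * D b') (b' * b'))" for y
  have "P (Fraction_Field.Fract (D a * b - a * D b) (b * b))"
    unfolding P_def using assms by blast
  moreover have "fract_der D (Fraction_Field.Fract a b) = (SOME y. P y)"
    unfolding fract_der_def P_def ..
  ultimately have "P (fract_der D (Fraction_Field.Fract a b))"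
    by (simp add: someI)
  then obtain a' b' where b': "b' \<noteq> 0" "Fraction_Field.Fract a b = Fraction_Field.Fract a' b'"
    and der_eq: "fract_der D (Fraction_Field.Fract a b) = Fraction_Field.Fract (D a' * b' - a' * D b') (b' * b')"
    unfolding P_def by blast
  from b' have "a * b' = a' * b" using assms by (simp add: eq_fract)
  then show ?thesis
    unfolding der_eq by (rule quotient_rule_welldef[OF assms b'(1), symmetric])
qed

lemma fract_der_to_fract: "fract_der D (to_fract a) = to_fract (D a)"
  by (simp add: to_fract_def fract_der_Fract)

lemma derivation_fract_der: "derivation (fract_der D)"
proof
  fix x y :: "'a fract"
  obtain a b c d where x: "x = Fraction_Field.Fract a b" "b \<noteq> 0" and y: "y = Fraction_Field.Fract c d" "d \<noteq> 0"
    by (cases x; cases y) blast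
  have nz: "b * d \<noteq> 0" "b * b \<noteq> 0" "d * d \<noteq> 0" "b * d * (b * d) \<noteq> 0"
    "b * b * (d * d) \<noteq> 0" "b * b * d \<noteq> 0" "b * (d * d) \<noteq> 0" "b * b * d * (b * (d * d)) \<noteq> 0"
    using x y by simp_all
  have "(D (a * d + c * b) * (b * d) - (a * d + c * b) * D (b * d)) * (b * b * (d * d)) =
      ((D a * b - a * D b) * (d * d) + (D c * d - c * D d) * (b * b)) * (b * d * (b * d))"
    unfolding D_add D_mult by algebra
  then show "fract_der D (x + y) = fract_der D x + fract_der D y"
    unfolding x y add_fract[OF x(2) y(2)] fract_der_Fract[OF nz(1)] fract_der_Fract[OF x(2)]
      fract_der_Fract[OF y(2)] add_fract[OF nz(2) nz(3)] eq_fract(1)[OF nz(4) nz(5)] .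
  have "(D (a * c) * (b * d) - (a * c) * D (b * d)) * (b * b * d * (b * (d * d))) =
      ((D a * b - a * D b) * c * (b * (d * d)) + (a * (D c * d - c * D d)) * (b * b * d)) * (b * d * (b * d))"
    unfolding D_mult by algebra
  then show "fract_der D (x * y) = fract_der D x * y + x * fract_der D y"
    unfolding x y mult_fract fract_der_Fract[OF nz(1)] fract_der_Fract[OF x(2)]
      fract_der_Fract[OF y(2)] mult_fract add_fract[OF nz(6) nz(7)] eq_fract(1)[OF nz(4) nz(8)] .
qed

end

instance fract :: ("{idom,ring_char_0}") field_char_0
proof
  show "inj (of_nat :: nat \<Rightarrow> 'a fract)"
    by (rule injI) (simp add: of_nat_fract eq_fract)
qed

lemma to_fract_of_nat: "to_fract (of_nat n) = of_nat n"
  by (simp add: to_fract_def of_nat_fract)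

lemma to_fract_of_int: "to_fract (of_int k) = of_int k"
  by (cases k rule: int_cases) (simp_all add: to_fract_of_nat)

lemma pairing_add: "pairing p (m + n) = pairing p m + pairing p n"
  by (simp add: pairing_def lookup_add distrib_left sum.distrib)

lemma pairing_zero [simp]: "pairing p 0 = 0"
  by (simp add: pairing_def)

lemma pairing_unit_vector: "pairing p (Poly_Mapping.single i 1) = Poly_Mapping.lookup p i"
  by (simp add: pairing_def lookup_single when_def if_distrib[of "(*) _"] cong: if_cong)

lemma poly_mapping_sum_single:
  fixes f :: "'a \<Rightarrow>\<^sub>0 'b::comm_monoid_add"
  shows "(\<Sum>m\<in>Poly_Mapping.keys f. Poly_Mapping.single m (Poly_Mapping.lookup f m)) = f"
  by (rule poly_mapping_eqI)
    (simp add: lookup_sum lookup_single when_def in_keys_iff eq_commute[of _ "_::'a"])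

lemma poly_mapping_additive_induct [case_names zero single add]:
  fixes f :: "'a \<Rightarrow>\<^sub>0 'b::comm_monoid_add"
  assumes "P 0" "\<And>m c. P (Poly_Mapping.single m c)" "\<And>f g. P f \<Longrightarrow> P g \<Longrightarrow> P (f + g)"
  shows "P f"
proof -
  have "P (\<Sum>m\<in>A. Poly_Mapping.single m (Poly_Mapping.lookup f m))" for A
    by (induction A rule: infinite_finite_induct) (simp_all add: assms)
  then show ?thesis by (metis poly_mapping_sum_single)
qed

lemma lookup_der_poly:
  "Poly_Mapping.lookup (der_poly p e f) k = Poly_Mapping.lookup f (k - e) * of_int (pairing p (k - e))"
proof -
  have "Poly_Mapping.lookup (der_poly p e f) k =
     (\<Sum>m\<in>Poly_Mapping.keys f. if m = k - e then Poly_Mapping.lookup f m * of_int (pairing p m) else 0)"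
    unfolding der_poly_def lookup_sum lookup_single when_def
    by (intro sum.cong refl) (auto simp: eq_diff_eq)
  then show ?thesis by (simp add: in_keys_iff)
qed

lemma der_poly_single:
  "der_poly p e (Poly_Mapping.single m c) = Poly_Mapping.single (m + e) (c * of_int (pairing p m))"
  by (rule poly_mapping_eqI) (auto simp: lookup_der_poly lookup_single when_def eq_diff_eq)

lemma der_poly_add: "der_poly p e (f + g) = der_poly p e f + der_poly p e g"
  by (rule poly_mapping_eqI) (simp add: lookup_der_poly lookup_add distrib_right)

lemma derivation_der_poly: "derivation (der_poly p e)"
proof
  show "der_poly p e (f + g) = der_poly p e f + der_poly p e g" for f g
    by (rule der_poly_add)
  have der_zero: "der_poly p e 0 = 0"
    using der_poly_add[of p e 0 0] by simp
  have single_single: "der_poly p e (Poly_Mapping.single m a * Poly_Mapping.single n b) =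
      der_poly p e (Poly_Mapping.single m a) * Poly_Mapping.single n b
      + Poly_Mapping.single m a * der_poly p e (Poly_Mapping.single n b)" for m n a b
    by (simp add: der_poly_single mult_single pairing_add algebra_simps flip: single_add)
  have single_left: "der_poly p e (Poly_Mapping.single m a * g) =
      der_poly p e (Poly_Mapping.single m a) * g + Poly_Mapping.single m a * der_poly p e g" for m a g
    by (induction g rule: poly_mapping_additive_induct)
      (simp_all add: der_zero single_single der_poly_add distrib_left distrib_right add_ac)
  show "der_poly p e (f * g) = der_poly p e f * g + f * der_poly p e g" for f g
    by (induction f rule: poly_mapping_additive_induct)
      (simp_all add: der_zero single_left der_poly_add distrib_left distrib_right add_ac)
qed

type_synonym ('n, 'k) torus_field = "(('n \<Rightarrow>\<^sub>0 int) \<Rightarrow>\<^sub>0 'k) fract"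

lemma der_frac_eq_fract_der: "der_frac p e = fract_der (der_poly p e)"
  unfolding der_frac_def fract_der_def ..

lemma char0_derivation_der_frac:
  "char0_derivation (der_frac p e :: ('n::{finite,linorder}, 'k::field_char_0) torus_field \<Rightarrow> _)"
proof -
  interpret idom_derivation "der_poly p e :: (('n \<Rightarrow>\<^sub>0 int) \<Rightarrow>\<^sub>0 'k) \<Rightarrow> _"
    using derivation_der_poly by (simp add: idom_derivation_def)
  show ?thesis
    unfolding char0_derivation_def der_frac_eq_fract_der by (rule derivation_fract_der)
qed

definition chiK :: "('n::linorder \<Rightarrow>\<^sub>0 int) \<Rightarrow> ('n, 'k::field) torus_field" where
  "chiK m = to_fract (chi m)"

lemma chiK_nonzero: "chiK m \<noteq> 0"
  unfolding chiK_def chi_def by (metis lookup_single_eq lookup_zero one_neq_zero to_fract_eq_0_iff)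

context
  fixes p e :: "'n::{finite,linorder} \<Rightarrow>\<^sub>0 int"
begin

interpretation poly_der: idom_derivation "der_poly p e :: (('n \<Rightarrow>\<^sub>0 int) \<Rightarrow>\<^sub>0 'k::field_char_0) \<Rightarrow> _"
  using derivation_der_poly by (simp add: idom_derivation_def)

interpretation char0_derivation "der_frac p e :: ('n, 'k::field_char_0) torus_field \<Rightarrow> _"
  by (rule char0_derivation_der_frac)

lemma der_chiK: "der_frac p e (chiK m :: ('n, 'k::field_char_0) torus_field) = of_int (pairing p m) * chiK e * chiK m"
proof -
  have "der_poly p e (chi m) = (of_int (pairing p m) * chi e * chi m :: ('n \<Rightarrow>\<^sub>0 int) \<Rightarrow>\<^sub>0 'k)"
    by (simp add: chi_def der_poly_single mult_single add.commute flip: single_of_int)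
  then show ?thesis
    by (simp add: chiK_def der_frac_eq_fract_der poly_der.fract_der_to_fract to_fract_of_int)
qed

lemma der_chiK_power_mult:
  "der_frac p e (chiK e ^ n * chiK m :: ('n, 'k::field_char_0) torus_field) =
    of_int (pairing p m + int n * pairing p e) * chiK e ^ Suc n * chiK m"
proof -
  have "der_frac p e (chiK e ^ n :: ('n, 'k) torus_field) = of_nat n * of_int (pairing p e) * chiK e ^ Suc n"
    by (induction n) (simp_all add: D_mult der_chiK algebra_simps)
  then show ?thesis by (simp add: D_mult der_chiK algebra_simps)
qed

lemma iterated_der_chiK:
  "(der_frac p e ^^ n) (chiK m :: ('n, 'k::field_char_0) torus_field) =
    of_int (\<Prod>i<n. pairing p m + int i * pairing p e) * chiK e ^ n * chiK m"
proof (induction n)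
  case (Suc n)
  let ?c = "\<lambda>i. pairing p m + int i * pairing p e"
  have "(der_frac p e ^^ Suc n) (chiK m :: ('n, 'k) torus_field) =
      der_frac p e (of_int (\<Prod>i<n. ?c i) * (chiK e ^ n * chiK m))"
    using Suc.IH by (simp only: funpow.simps(2) o_apply mult.assoc)
  also have "\<dots> = of_int (\<Prod>i<n. ?c i) * (of_int (?c n) * chiK e ^ Suc n * chiK m)"
    by (simp only: D_scale_of_int der_chiK_power_mult)
  also have "\<dots> = of_int (\<Prod>i<Suc n. ?c i) * chiK e ^ Suc n * chiK m"
    by (simp only: prod.lessThan_Suc of_int_mult mult_ac)
  finally show ?case .
qed simp

lemma der_iterated_der_chiK:
  "der_frac p e ((der_frac p e ^^ n) (chiK m :: ('n, 'k::field_char_0) torus_field)) =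
    of_int (pairing p m + int n * pairing p e) * chiK e * (der_frac p e ^^ n) (chiK m)"
  using iterated_der_chiK[of "Suc n" m] by (simp add: iterated_der_chiK algebra_simps)

lemma exp_series_chiK_ode:
  "lin_fps (- (of_int (pairing p e) * chiK e)) * fps_deriv (exp_series (chiK m :: ('n, 'k::field_char_0) torus_field))
    = fps_const (of_int (pairing p m) * chiK e) * exp_series (chiK m)"
proof (rule linear_ode_of_recursion)
  fix n
  have "of_nat (Suc n) * exp_series (chiK m) $ Suc n = fps_deriv (exp_series (chiK m :: ('n, 'k) torus_field)) $ n"
    by (simp only: fps_deriv_nth Suc_eq_plus1)
  also have "\<dots> = der_frac p e (exp_series (chiK m) $ n)"
    by (simp only: fps_deriv_exp_series coeff_der_nth)
  also have "\<dots> = (of_int (pairing p m) * chiK e + of_nat n * (of_int (pairing p e) * chiK e)) * exp_series (chiK m) $ n"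
    by (simp only: exp_series_nth D_divide_of_nat der_iterated_der_chiK) (simp add: algebra_simps add_divide_distrib)
  finally show "of_nat (Suc n) * exp_series (chiK m :: ('n, 'k) torus_field) $ Suc n =
      (of_int (pairing p m) * chiK e + of_nat n * (of_int (pairing p e) * chiK e)) * exp_series (chiK m) $ n" .
qed

lemma exp_rational_chiK_dvd:
  assumes "exp_rational (chiK m :: ('n, 'k::field_char_0) torus_field)"
  shows "pairing p e dvd pairing p m"
proof -
  let ?z = "chiK e :: ('n, 'k) torus_field"
  obtain P Q where "Q \<noteq> 0" and QE: "fps_of_poly Q * exp_series (chiK m :: ('n, 'k) torus_field) = fps_of_poly P"
    using assms unfolding exp_rational_def by blast
  have "exp_series (chiK m :: ('n, 'k) torus_field) \<noteq> 0"
  proof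
    assume "exp_series (chiK m :: ('n, 'k) torus_field) = 0"
    then have "exp_series (chiK m :: ('n, 'k) torus_field) $ 0 = 0" by simp
    then show False by (simp add: chiK_nonzero)
  qed
  from linear_ode_rational_exponent[OF exp_series_chiK_ode this \<open>Q \<noteq> 0\<close> QE]
  obtain j :: int where "of_int (pairing p m) * ?z = of_int j * - (of_int (pairing p e) * ?z)" ..
  then have "of_int (pairing p m + j * pairing p e) * ?z = 0"
    by (simp add: algebra_simps)
  then have "pairing p m + j * pairing p e = 0"
    by (simp only: mult_eq_0_iff of_int_eq_0_iff chiK_nonzero simp_thms)
  then have "pairing p m = pairing p e * (- j)"
    by (simp add: algebra_simps add_eq_0_iff)
  then show ?thesis ..
qed

(* Conversely, if <p,m> = j <p,e> then E(chi^m) = chi^m (1 - <p,e> chi^e t)^(-j) is rational. *)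
lemma dvd_exp_rational_chiK:
  assumes "pairing p e dvd pairing p m"
  shows "exp_rational (chiK m :: ('n, 'k::field_char_0) torus_field)"
proof -
  from assms obtain j where j: "pairing p m = pairing p e * j" ..
  have exponent: "of_int (- j) * - (of_int (pairing p e) * chiK e) = (of_int (pairing p m) * chiK e :: ('n, 'k) torus_field)"
    by (simp add: j)
  have "lin_fps (- (of_int (pairing p e) * chiK e)) * fps_deriv (exp_series (chiK m))
      = fps_const (of_int (- j) * - (of_int (pairing p e) * chiK e)) * exp_series (chiK m :: ('n, 'k) torus_field)"
    unfolding exponent by (rule exp_series_chiK_ode)
  then show ?thesis
    unfolding exp_rational_def by (rule linear_ode_rational_solution)
qed

(* Every element of K is a quotient of sums of constants times characters. *)
lemma exp_rational_of_characters:
  assumes "\<And>m. exp_rational (chiK m :: ('n, 'k::field_char_0) torus_field)"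
  shows "exp_rational (x :: ('n, 'k) torus_field)"
proof -
  have polynomial: "exp_rational (to_fract f :: ('n, 'k) torus_field)" for f
  proof -
    have const: "der_frac p e (to_fract (Poly_Mapping.single 0 c) :: ('n, 'k) torus_field) = 0" for c
      by (simp add: der_frac_eq_fract_der poly_der.fract_der_to_fract der_poly_single)
    have "to_fract f = (\<Sum>m\<in>Poly_Mapping.keys f.
        to_fract (Poly_Mapping.single 0 (Poly_Mapping.lookup f m)) * (chiK m :: ('n, 'k) torus_field))"
      by (subst poly_mapping_sum_single[of f, symmetric]) (simp add: chiK_def chi_def mult_single flip: to_fract_mult)
    also have "exp_rational \<dots>"
      by (intro exp_rational_sum exp_rational_mult exp_rational_const const assms)
    finally show ?thesis .
  qed
  obtain a b where "x = Fraction_Field.Fract a b"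
    by (cases x) blast
  then have "x = to_fract a * inverse (to_fract b)"
    by (simp add: Fract_conv_to_fract divide_inverse)
  then show ?thesis
    by (simp add: exp_rational_mult exp_rational_inverse polynomial)
qed

end

theorem lemma3p4:
  fixes p e :: "'n::{finite,linorder} \<Rightarrow>\<^sub>0 int"
  assumes "primitive_vec p"
  shows "rationally_integrable (der_frac p e :: (('n \<Rightarrow>\<^sub>0 int) \<Rightarrow>\<^sub>0 'k::field_char_0) fract \<Rightarrow> _)
    \<longleftrightarrow> (pairing p e = 1 \<or> pairing p e = -1)"
proof -
  interpret char0_derivation "der_frac p e :: ('n, 'k) torus_field \<Rightarrow> _"
    by (rule char0_derivation_der_frac)
  have "rationally_integrable (der_frac p e :: ('n, 'k) torus_field \<Rightarrow> _) \<longleftrightarrow>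
      (\<forall>m. exp_rational (chiK m :: ('n, 'k) torus_field))"
    unfolding rationally_integrable_iff using exp_rational_of_characters by blast
  also have "\<dots> \<longleftrightarrow> (\<forall>m. pairing p e dvd pairing p m)"
    using exp_rational_chiK_dvd dvd_exp_rational_chiK by blast
  also have "\<dots> \<longleftrightarrow> is_unit (pairing p e)"
  proof
    assume "\<forall>m. pairing p e dvd pairing p m"
    then have "\<forall>i. pairing p e dvd Poly_Mapping.lookup p i"
      by (metis pairing_unit_vector)
    with assms show "is_unit (pairing p e)"
      unfolding primitive_vec_def by blast
  qed (simp add: unit_imp_dvd dvd_trans)
  also have "\<dots> \<longleftrightarrow> pairing p e = 1 \<or> pairing p e = -1"
    by (auto simp: abs_if split: if_splits)
  finally show ?thesis .
qed

end
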